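(* Let $X_1,\dots,X_n$ be i.i.d. standard Gaussian random variables ($\mathbb{E}[X_i]=0$, $\mathbb{E}[X_i^2]=1$), let $S_k=\sum_{i=1}^kX_i$ and $S_n^*=\max_{1\le i\le n}|S_i|$. Then for any $\ell>0$, \[\Pr[S_n^*<4\sqrt{\ell}]\ge 4^{-n/\ell}.\] *)

theory Defs
  imports "HOL-Probability.Probability"
begin

end

theory Submission
  imports Defs
begin

text \<open>Put \<open>a = 4 sqrt l\<close>, \<open>\<theta> = \<pi> / (2a)\<close>, and let \<open>g\<close> be the cosine bump: \<open>g z = cos (\<theta> z)\<close> on
  \<open>(-a, a)\<close> and \<open>0\<close> outside. The heart of the proof is the one-step inequality
  \<open>E g (y + X) \<ge> c g y\<close> with \<open>c = 4 powr (-1/l)\<close> for standard normal \<open>X\<close>. Away from the edge of the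
  band it comes from \<open>E cos (\<theta> (y + X)) = exp (-\<theta>\<^sup>2/2) cos (\<theta> y)\<close>, cutting off the cosine outside
  the band costing at most \<open>E X\<^sup>4 / (16 a\<^sup>4) = 3 / (16 a\<^sup>4)\<close>; near the edge, where \<open>cos (\<theta> y)\<close> is
  small, a direct lower bound for the integral over a short window takes over. Iterated along the
  walk killed on leaving \<open>(-a, a)\<close>, the inequality gives
  \<open>c\<^sup>n = c\<^sup>n g 0 \<le> E [g S\<^sub>n; |S\<^sub>k| < a for all k \<le> n] \<le> P (max |S\<^sub>k| < a)\<close>, as \<open>g \<le> 1\<close>.\<close>

lemma sin_ge_half_self:
  fixes x :: real
  assumes "0 \<le> x" "x \<le> 1"
  shows "x / 2 \<le> sin x"
proof -
  have "\<bar>sin x - (\<Sum>m<3. sin_coeff m * x ^ m)\<bar> \<le> inverse (fact 3) * \<bar>x\<bar> ^ 3"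
    by (rule Maclaurin_sin_bound)
  moreover have "(\<Sum>m<3. sin_coeff m * x ^ m) = x"
    by (simp add: sin_coeff_def numeral_3_eq_3)
  ultimately have "\<bar>sin x - x\<bar> \<le> x ^ 3 / 6"
    using assms by (simp add: fact_numeral abs_le_iff)
  moreover have "x ^ 3 \<le> x"
    using assms power_le_one[of x 2] mult_left_mono[of "x\<^sup>2" 1 x]
    by (simp add: power3_eq_cube power2_eq_square)
  ultimately show ?thesis
    using abs_ge_minus_self[of "sin x - x"] assms by linarith
qed

lemma exp_minus_one_ge_cube:
  fixes x :: real
  assumes "0 \<le> x"
  shows "x ^ 3 / 27 \<le> exp x - 1"
proof -
  have "(1 + x/3) ^ 3 \<le> exp (x/3) ^ 3"
    using exp_ge_add_one_self[of "x/3"] assms by (intro power_mono) auto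
  also have "\<dots> = exp x"
    by (simp add: exp_of_nat_mult[symmetric])
  finally have "(1 + x/3) ^ 3 \<le> exp x" .
  moreover have "(1 + x/3) ^ 3 = 1 + x + x\<^sup>2/3 + x ^ 3 / 27"
    by (simp add: power3_eq_cube power2_eq_square field_simps)
  ultimately show ?thesis
    using assms by (smt (verit) zero_le_power2 divide_nonneg_pos)
qed

lemma mult_le_of_constant_and_affine_lower_bounds:
  fixes c \<rho> \<tau> L I u :: real
  assumes c: "0 < c" "c \<le> \<rho>" "c * \<tau> \<le> L * (\<rho> - c)"
    and bounds: "L \<le> I" "\<rho> * u - \<tau> \<le> I"
  shows "c * u \<le> I"
proof (cases "c * u \<le> L")
  case True
  with bounds show ?thesis
    by linarith
next
  case False
  have "c * \<tau> \<le> (\<rho> - c) * L"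
    using c by (simp add: mult.commute)
  also have "\<dots> \<le> (\<rho> - c) * (c * u)"
    using False c by (intro mult_left_mono) auto
  also have "\<dots> = c * ((\<rho> - c) * u)"
    by (simp add: algebra_simps)
  finally have "\<tau> \<le> \<rho> * u - c * u"
    using c(1) by (simp add: left_diff_distrib)
  with bounds show ?thesis
    by linarith
qed

lemma cos_nonpos_if_abs_between:
  fixes x :: real
  assumes "pi / 2 \<le> \<bar>x\<bar>" "\<bar>x\<bar> \<le> 3 * pi / 2"
  shows "cos x \<le> 0"
proof -
  have "0 \<le> cos (pi - \<bar>x\<bar>)"
    using assms by (intro cos_ge_zero) auto
  moreover have "cos x = - cos (pi - \<bar>x\<bar>)"
    by simp
  ultimately show ?thesis
    by linarith
qed

lemma four_powr_neg_le_exp_neg: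
  fixes x :: real
  assumes "0 \<le> x"
  shows "4 powr (- x) \<le> exp (- x)"
proof -
  have "exp 1 \<le> (4::real)"
    using e_less_272 by simp
  then have "1 \<le> ln (4::real)"
    using ln_le_cancel_iff[of "exp 1" 4] by simp
  then have "x \<le> x * ln (4::real)"
    using assms mult_left_mono[of 1 "ln 4" x] by simp
  then show ?thesis
    by (simp add: powr_def)
qed

lemma std_normal_cos_sin_expectation:
  fixes th :: real
  shows "integrable std_normal_distribution (\<lambda>t. cos (th * t))"
    and "integrable std_normal_distribution (\<lambda>t. sin (th * t))"
    and "(\<integral>t. cos (th * t) \<partial>std_normal_distribution) = exp (- (th\<^sup>2) / 2)"
    and "(\<integral>t. sin (th * t) \<partial>std_normal_distribution) = 0"
proof -
  interpret real_distribution std_normal_distribution by (rule real_dist_normal_dist)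
  have int: "integrable std_normal_distribution (\<lambda>t. iexp (th * t))"
    by (rule integrable_iexp) auto
  have re: "(\<lambda>t. Re (iexp (th * t))) = (\<lambda>t. cos (th * t))"
    and im: "(\<lambda>t. Im (iexp (th * t))) = (\<lambda>t. sin (th * t))"
    by (simp_all add: Re_exp Im_exp)
  have char: "char std_normal_distribution th = (CLINT t|std_normal_distribution. iexp (th * t))"
    by (simp add: char_def)
  show "integrable std_normal_distribution (\<lambda>t. cos (th * t))"
    using integrable_Re[OF int] unfolding re .
  show "integrable std_normal_distribution (\<lambda>t. sin (th * t))"
    using integrable_Im[OF int] unfolding im .
  show "(\<integral>t. cos (th * t) \<partial>std_normal_distribution) = exp (- (th\<^sup>2) / 2)"
    using arg_cong[OF char, of Re] unfolding integral_Re[OF int, symmetric] re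
    by (simp add: char_std_normal_distribution)
  show "(\<integral>t. sin (th * t) \<partial>std_normal_distribution) = 0"
    using arg_cong[OF char, of Im] unfolding integral_Im[OF int, symmetric] im
    by (simp add: char_std_normal_distribution)
qed

lemma std_normal_density_antimono:
  assumes "\<bar>t\<bar> \<le> w"
  shows "std_normal_density w \<le> std_normal_density t"
proof -
  have "t\<^sup>2 \<le> w\<^sup>2"
    using power_mono[of "\<bar>t\<bar>" w 2] assms by simp
  then show ?thesis
    by (simp add: std_normal_density_def divide_right_mono)
qed

lemma std_normal_density_ge_one_sixth:
  assumes "\<bar>w\<bar> \<le> 1"
  shows "1/6 \<le> std_normal_density w"
proof -
  have "exp (-(1/2)) \<ge> (1/2::real)"
    using exp_ge_add_one_self[of "-(1/2)"] by simp
  moreover have "sqrt (2 * pi) \<le> 3"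
    using real_sqrt_le_mono[of "2 * pi" 9] pi_less_4 by simp
  ultimately have "1/6 \<le> std_normal_density 1"
    by (simp add: std_normal_density_def field_simps)
  also have "\<dots> \<le> std_normal_density w"
    using assms by (rule std_normal_density_antimono)
  finally show ?thesis .
qed

section \<open>The cosine bump\<close>

definition cos_bump :: "real \<Rightarrow> real \<Rightarrow> real" where
  "cos_bump b z = (if \<bar>z\<bar> < b then cos (pi / (2 * b) * z) else 0)"

lemma cos_bump_measurable [measurable]: "cos_bump b \<in> borel_measurable borel"
  unfolding cos_bump_def by measurable

lemma cos_bump_le_one: "cos_bump b z \<le> 1"
  by (simp add: cos_bump_def)

lemma cos_bump_outside: "b \<le> \<bar>z\<bar> \<Longrightarrow> cos_bump b z = 0"
  by (simp add: cos_bump_def)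

lemma cos_bump_zero: "0 < b \<Longrightarrow> cos_bump b 0 = 1"
  by (simp add: cos_bump_def)

lemma cos_scaled_nonneg:
  assumes "0 < b" "\<bar>z\<bar> \<le> b"
  shows "0 \<le> cos (pi / (2 * b) * z)"
proof (rule cos_ge_zero)
  have "\<bar>pi / (2 * b) * z\<bar> = pi / (2 * b) * \<bar>z\<bar>"
    using assms by (simp add: abs_mult)
  also have "\<dots> \<le> pi / (2 * b) * b"
    using assms by (intro mult_left_mono) auto
  also have "\<dots> = pi / 2"
    using assms by simp
  finally show "- (pi / 2) \<le> pi / (2 * b) * z" "pi / (2 * b) * z \<le> pi / 2"
    unfolding abs_le_iff by linarith+
qed

lemma cos_bump_nonneg: "0 < b \<Longrightarrow> 0 \<le> cos_bump b z"
  using cos_scaled_nonneg[of b z] by (simp add: cos_bump_def)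

text \<open>Where the bump vanishes but \<open>|y + t| \<le> 3b\<close>, the cosine is nonpositive; beyond that
  \<open>|t| > 2b\<close>, so the quartic term exceeds \<open>1\<close>.\<close>

lemma cos_bump_ge_cos_minus_quartic:
  assumes b: "0 < b" and y: "\<bar>y\<bar> < b"
  shows "cos (pi / (2 * b) * (y + t)) - t ^ 4 / (16 * b ^ 4) \<le> cos_bump b (y + t)"
proof -
  let ?th = "pi / (2 * b)"
  consider "\<bar>y + t\<bar> < b" | "b \<le> \<bar>y + t\<bar>" "\<bar>y + t\<bar> \<le> 3 * b" | "3 * b < \<bar>y + t\<bar>"
    by linarith
  then show ?thesis
  proof cases
    case 1
    then show ?thesis by (simp add: cos_bump_def)
  next
    case 2
    have "\<bar>?th * (y + t)\<bar> = ?th * \<bar>y + t\<bar>"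
      using b by (simp add: abs_mult)
    moreover have "?th * b \<le> ?th * \<bar>y + t\<bar>" "?th * \<bar>y + t\<bar> \<le> ?th * (3 * b)"
      using 2 b by (intro mult_left_mono; simp)+
    ultimately have "cos (?th * (y + t)) \<le> 0"
      using b by (intro cos_nonpos_if_abs_between) simp_all
    moreover have "0 \<le> t ^ 4 / (16 * b ^ 4)"
      using b by simp
    moreover have "cos_bump b (y + t) = 0"
      using 2 by (simp add: cos_bump_def)
    ultimately show ?thesis
      by linarith
  next
    case 3
    then have "(2 * b) ^ 4 \<le> \<bar>t\<bar> ^ 4"
      using y b by (intro power_mono) auto
    then have "1 \<le> t ^ 4 / (16 * b ^ 4)"
      using b by (simp add: power_mult_distrib)
    moreover have "cos_bump b (y + t) = 0"
      using 3 b by (simp add: cos_bump_def)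
    ultimately show ?thesis
      using cos_le_one[of "?th * (y + t)"] by linarith
  qed
qed

lemma integrable_cos_bump_shift:
  assumes "0 < b"
  shows "integrable std_normal_distribution (\<lambda>t. cos_bump b (y + t))"
proof -
  interpret real_distribution std_normal_distribution
    by (rule real_dist_normal_dist)
  show ?thesis
    using cos_bump_le_one cos_bump_nonneg[OF assms] by (intro integrable_const_bound[where B=1]) auto
qed

lemma integral_cos_bump_shift_ge:
  assumes b: "0 < b" and y: "\<bar>y\<bar> < b"
  shows "exp (- ((pi / (2 * b))\<^sup>2) / 2) * cos (pi / (2 * b) * y) - 3 / (16 * b ^ 4)
           \<le> (\<integral>t. cos_bump b (y + t) \<partial>std_normal_distribution)"
proof -
  interpret real_distribution std_normal_distribution
    by (rule real_dist_normal_dist)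
  define th where "th = pi / (2 * b)"
  note cs = std_normal_cos_sin_expectation[of th]
  have quartic: "integrable std_normal_distribution (\<lambda>t. t ^ 4)"
    "(\<integral>t. t ^ 4 \<partial>std_normal_distribution) = 3"
    using std_normal_distribution_even_moments[of 2] by (simp_all add: fact_numeral)
  have cos_add_shift: "cos (th * (y + t)) = cos (th * y) * cos (th * t) - sin (th * y) * sin (th * t)" for t
    by (simp add: distrib_left cos_add)
  have "exp (- (th\<^sup>2) / 2) * cos (th * y) - 3 / (16 * b ^ 4)
      = (\<integral>t. cos (th * (y + t)) - t ^ 4 / (16 * b ^ 4) \<partial>std_normal_distribution)"
    unfolding cos_add_shift using cs quartic by (simp add: integral_diff)
  also have "\<dots> \<le> (\<integral>t. cos_bump b (y + t) \<partial>std_normal_distribution)"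
  proof (rule integral_mono)
    show "integrable std_normal_distribution (\<lambda>t. cos (th * (y + t)) - t ^ 4 / (16 * b ^ 4))"
      unfolding cos_add_shift using cs quartic by auto
  qed (use integrable_cos_bump_shift[OF b] cos_bump_ge_cos_minus_quartic[OF b y] in
        \<open>simp_all add: th_def\<close>)
  finally show ?thesis
    unfolding th_def .
qed

lemma cos_scaled_ge_margin:
  assumes b: "0 < b" and w: "0 < w" "w \<le> b" and u: "\<bar>u\<bar> \<le> b - w / 4"
  shows "pi / (2 * b) * w / 8 \<le> cos (pi / (2 * b) * u)"
proof -
  define th where "th = pi / (2 * b)"
  have th: "0 < th" "th * b = pi / 2"
    using b by (simp_all add: th_def)
  then have edge: "cos (th * b) = 0" "sin (th * b) = 1"
    unfolding th(2) by simp_all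
  have "th * w \<le> pi / 2"
    using th w by (metis mult_left_mono less_imp_le)
  then have "th * w / 8 \<le> sin (th * w / 4)"
    using sin_ge_half_self[of "th * w / 4"] th w pi_less_4 by simp
  also have "sin (th * w / 4) = cos (th * (b - w / 4))"
    using edge by (simp add: right_diff_distrib cos_diff)
  also have "\<dots> \<le> cos (th * \<bar>u\<bar>)"
  proof (rule cos_monotone_0_pi_le)
    show "th * \<bar>u\<bar> \<le> th * (b - w / 4)"
      using th u by (intro mult_left_mono) auto
    have "th * (b - w / 4) \<le> th * b"
      using th w by (intro mult_left_mono) auto
    then show "th * (b - w / 4) \<le> pi"
      using th(2) pi_gt_zero by linarith
  qed (use th in simp)
  also have "\<dots> = cos (th * u)"
    using th(1) cos_abs_real[of "th * u"] by (simp add: abs_mult)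
  finally show ?thesis
    unfolding th_def .
qed

text \<open>Near the edge of the band \<open>cos (\<theta> y)\<close> is small and the Fourier bound is useless. Instead,
  the integrand is bounded below on a window of length \<open>w/2\<close> at distance at least \<open>w/4\<close> from the
  edge: there the density is at least \<open>\<phi> w\<close> and the bump at least \<open>\<theta> w / 8\<close>.\<close>

lemma nn_integral_cos_bump_shift_ge_window:
  assumes b: "0 < b" and y: "\<bar>y\<bar> < b" and w: "0 < w" "w \<le> b"
  shows "ennreal (std_normal_density w * (pi / (2 * b) * w / 8) * (w / 2))
           \<le> (\<integral>\<^sup>+t. ennreal (cos_bump b (y + t)) \<partial>std_normal_distribution)"
proof -
  define m where "m = max (- (w / 2)) (min (w / 2) y)"
  define h where "h = std_normal_density w * (pi / (2 * b) * w / 8)"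
  let ?W = "{- m - w / 4 .. - m + w / 4}"
  have h_le: "ennreal h * indicator ?W t \<le> ennreal (std_normal_density t) * ennreal (cos_bump b (y + t))"
    for t
  proof (cases "t \<in> ?W")
    case True
    then have "\<bar>t\<bar> \<le> w" "\<bar>y + t\<bar> \<le> b - w / 4"
      using y w unfolding m_def by (auto simp: abs_le_iff max_def min_def split: if_splits)
    then have "h \<le> std_normal_density t * cos_bump b (y + t)"
      unfolding h_def cos_bump_def
      using std_normal_density_antimono cos_scaled_ge_margin[OF b w] w b
      by (intro mult_mono) (auto intro: mult_nonneg_nonneg)
    then show ?thesis
      using True by (simp add: ennreal_mult'[symmetric] ennreal_leI)
  qed simp
  have "0 \<le> h"
    using b w by (simp add: h_def)
  then have "ennreal (h * (w / 2)) = ennreal h * ennreal (w / 2)"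
    using w by (intro ennreal_mult) auto
  also have "\<dots> = ennreal h * emeasure lborel ?W"
    using w by simp
  also have "\<dots> = (\<integral>\<^sup>+t. ennreal h * indicator ?W t \<partial>lborel)"
    by (simp add: nn_integral_cmult_indicator)
  also have "\<dots> \<le> (\<integral>\<^sup>+t. ennreal (std_normal_density t) * ennreal (cos_bump b (y + t)) \<partial>lborel)"
    using h_le by (intro nn_integral_mono) auto
  also have "\<dots> = (\<integral>\<^sup>+t. ennreal (cos_bump b (y + t)) \<partial>std_normal_distribution)"
    by (rule nn_integral_density[symmetric]) auto
  finally show ?thesis
    unfolding h_def .
qed

section \<open>The one-step inequality\<close>

lemma window_gain_ge_quartic_error:
  fixes s :: real
  assumes s: "0 < s"
  defines "w \<equiv> min 1 (4 * s)"
  shows "3 / (16 * (4 * s) ^ 4)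
           \<le> std_normal_density w * (pi / (2 * (4 * s)) * w / 8) * (w / 2) * (exp (7 / (8 * s\<^sup>2)) - 1)"
proof -
  define L where "L = std_normal_density w * (pi / (2 * (4 * s)) * w / 8) * (w / 2)"
  have w: "0 < w" "w \<le> 1"
    using s by (simp_all add: w_def)
  have "w\<^sup>2 / (256 * s) = 1/6 * (3 * w\<^sup>2 / (128 * s))"
    by simp
  also have "\<dots> \<le> std_normal_density w * (pi * w\<^sup>2 / (128 * s))"
    using std_normal_density_ge_one_sixth[of w] w s pi_gt3
    by (intro mult_mono divide_right_mono mult_right_mono) auto
  also have "\<dots> = L"
    by (simp add: L_def power2_eq_square)
  finally have L: "w\<^sup>2 / (256 * s) \<le> L" .
  moreover have "0 \<le> w\<^sup>2 / (256 * s)"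
    using s by simp
  ultimately have "0 \<le> L"
    by linarith
  let ?x = "7 / (8 * s\<^sup>2)"
  have x: "0 \<le> ?x" "?x \<le> exp ?x - 1" "?x ^ 3 / 27 \<le> exp ?x - 1"
    using exp_ge_add_one_self[of ?x] exp_minus_one_ge_cube[of ?x] by (simp, linarith, simp)
  show ?thesis
  proof (cases "1/4 \<le> s")
    case True
    then have "w = 1"
      by (simp add: w_def)
    have "3 / (16 * (4 * s) ^ 4) = 7 / (2048 * s ^ 3) * (3 / (14 * s))"
      using s by (simp add: field_simps power4_eq_xxxx power3_eq_cube)
    also have "\<dots> \<le> 7 / (2048 * s ^ 3)"
      using True by (intro mult_left_le) simp_all
    also have "\<dots> = w\<^sup>2 / (256 * s) * ?x"
      using s \<open>w = 1\<close> by (simp add: field_simps power3_eq_cube power2_eq_square)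
    also have "\<dots> \<le> L * (exp ?x - 1)"
      using L \<open>0 \<le> L\<close> x s by (intro mult_mono) auto
    finally show ?thesis
      unfolding L_def .
  next
    case False
    then have "w = 4 * s"
      by (simp add: w_def)
    have "3 / (16 * (4 * s) ^ 4) = 343 / (221184 * s ^ 5) * (663552 * s / 1404928)"
      using s by (simp add: field_simps eval_nat_numeral)
    also have "\<dots> \<le> 343 / (221184 * s ^ 5)"
      using False s by (intro mult_left_le) simp_all
    also have "\<dots> = w\<^sup>2 / (256 * s) * (?x ^ 3 / 27)"
      using s \<open>w = 4 * s\<close> by (simp add: field_simps eval_nat_numeral)
    also have "\<dots> \<le> L * (exp ?x - 1)"
      using L \<open>0 \<le> L\<close> x s by (intro mult_mono) auto
    finally show ?thesis
      unfolding L_def .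
  qed
qed

text \<open>Since \<open>\<rho> \<ge> exp (-1/(8l))\<close> and \<open>c \<le> exp (-1/l)\<close>, the gap \<open>\<rho> - c\<close> is at least
  \<open>c (exp (7/(8l)) - 1)\<close>.\<close>

lemma cos_bump_step_constants:
  fixes l :: real
  assumes l: "0 < l"
  defines "a \<equiv> 4 * sqrt l"
  defines "\<rho> \<equiv> exp (- ((pi / (2 * a))\<^sup>2) / 2)" and "c \<equiv> 4 powr (- 1 / l)" and "w \<equiv> min 1 a"
  shows "c \<le> \<rho>"
    and "c * (3 / (16 * a ^ 4)) \<le> std_normal_density w * (pi / (2 * a) * w / 8) * (w / 2) * (\<rho> - c)"
proof -
  define s where "s = sqrt l"
  define L where "L = std_normal_density w * (pi / (2 * a) * w / 8) * (w / 2)"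
  have s: "0 < s" "l = s\<^sup>2" "a = 4 * s"
    using l by (simp_all add: s_def a_def)
  have c: "0 < c" "c \<le> exp (- 1 / l)"
    using four_powr_neg_le_exp_neg[of "1 / l"] l by (simp_all add: c_def)
  have "pi\<^sup>2 \<le> 4\<^sup>2"
    using pi_less_4 pi_gt_zero by (intro power_mono) auto
  then have "(pi / (2 * a))\<^sup>2 / 2 \<le> 1 / (8 * l)"
    using s by (simp add: field_simps)
  then have \<rho>: "exp (- 1 / (8 * l)) \<le> \<rho>"
    by (simp add: \<rho>_def)
  have exp_split: "exp (- 1 / (8 * l)) = exp (- 1 / l) * exp (7 / (8 * l))"
    using l by (simp add: exp_add[symmetric] field_simps)
  have "exp (- 1 / l) \<le> exp (- 1 / (8 * l))"
    using l by (simp add: field_simps)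
  then show "c \<le> \<rho>"
    using c \<rho> by linarith
  have key: "3 / (16 * a ^ 4) \<le> L * (exp (7 / (8 * l)) - 1)"
    using window_gain_ge_quartic_error[OF s(1)] s by (simp add: L_def w_def)
  have "c * (3 / (16 * a ^ 4)) \<le> exp (- 1 / l) * (L * (exp (7 / (8 * l)) - 1))"
    using c key s by (intro mult_mono) auto
  also have "\<dots> = L * (exp (- 1 / (8 * l)) - exp (- 1 / l))"
    unfolding exp_split by (simp add: algebra_simps)
  also have "\<dots> \<le> L * (\<rho> - c)"
    using c \<rho> std_normal_density_ge_one_sixth[of w] s
    by (intro mult_left_mono) (auto simp: L_def w_def)
  finally show "c * (3 / (16 * a ^ 4)) \<le> L * (\<rho> - c)" .
qed

text \<open>The Fourier bound \<open>\<rho> cos (\<theta> y) - \<tau>\<close> dominates \<open>c cos (\<theta> y)\<close> unless \<open>c cos (\<theta> y)\<close> is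
  below the window bound \<open>L\<close>, which then suffices.\<close>

lemma nn_integral_cos_bump_shift_ge:
  fixes l y :: real
  assumes l: "0 < l"
  shows "ennreal (4 powr (- 1 / l)) * ennreal (cos_bump (4 * sqrt l) y)
           \<le> (\<integral>\<^sup>+t. ennreal (cos_bump (4 * sqrt l) (y + t)) \<partial>std_normal_distribution)"
proof (cases "\<bar>y\<bar> < 4 * sqrt l")
  case False
  then show ?thesis
    by (simp add: cos_bump_def)
next
  case True
  define a where "a = 4 * sqrt l"
  define c where "c = 4 powr (- 1 / l)"
  define \<rho> where "\<rho> = exp (- ((pi / (2 * a))\<^sup>2) / 2)"
  define \<tau> where "\<tau> = 3 / (16 * a ^ 4)"
  define w where "w = min 1 a"
  define L where "L = std_normal_density w * (pi / (2 * a) * w / 8) * (w / 2)"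
  define u where "u = cos (pi / (2 * a) * y)"
  define I where "I = (\<integral>t. cos_bump a (y + t) \<partial>std_normal_distribution)"
  have a: "0 < a" "\<bar>y\<bar> < a"
    using l True by (simp_all add: a_def)
  have c: "0 < c" "c \<le> \<rho>" "c * \<tau> \<le> L * (\<rho> - c)"
    using cos_bump_step_constants[OF l] by (simp_all add: a_def c_def \<rho>_def \<tau>_def w_def L_def)
  have nn_integral_eq: "(\<integral>\<^sup>+t. ennreal (cos_bump a (y + t)) \<partial>std_normal_distribution) = ennreal I"
    unfolding I_def using integrable_cos_bump_shift[OF a(1)] cos_bump_nonneg[OF a(1)]
    by (intro nn_integral_eq_integral) auto
  have "0 \<le> I"
    unfolding I_def using cos_bump_nonneg[OF a(1)] by (intro integral_nonneg_AE) auto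
  moreover have "ennreal L \<le> ennreal I"
    using nn_integral_cos_bump_shift_ge_window[OF a, of w] a
    unfolding nn_integral_eq by (simp add: L_def w_def)
  ultimately have window: "L \<le> I"
    by simp
  have fourier: "\<rho> * u - \<tau> \<le> I"
    using integral_cos_bump_shift_ge[OF a] by (simp add: \<rho>_def u_def \<tau>_def I_def)
  have "c * u \<le> I"
    using c window fourier by (rule mult_le_of_constant_and_affine_lower_bounds)
  moreover have "0 \<le> u"
    using cos_scaled_nonneg[of a y] a by (simp add: u_def)
  ultimately have "ennreal c * ennreal (cos_bump a y) \<le> ennreal I"
    using a c by (simp add: cos_bump_def u_def ennreal_mult[symmetric] ennreal_leI)
  then show ?thesis
    unfolding nn_integral_eq[unfolded a_def] by (simp add: a_def c_def)
qed

section \<open>Walks confined to a band\<close>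

definition confined :: "real \<Rightarrow> nat \<Rightarrow> (nat \<Rightarrow> real) \<Rightarrow> bool" where
  "confined a n x \<longleftrightarrow> (\<forall>k\<in>{1..n}. \<bar>\<Sum>i=1..k. x i\<bar> < a)"

lemma borel_measurable_partial_sum:
  assumes "{1..k} \<subseteq> I"
  shows "(\<lambda>x. \<Sum>i=1..k. x i :: real) \<in> borel_measurable (PiM I (\<lambda>_. borel))"
  using assms by (intro borel_measurable_sum measurable_component_singleton) auto

lemma pred_confined:
  assumes "{1..n} \<subseteq> I"
  shows "Measurable.pred (PiM I (\<lambda>_. borel)) (confined a n)"
  unfolding confined_def
proof (intro pred_intros_finite(3))
  fix k assume "k \<in> {1..n}"
  then have [measurable]: "(\<lambda>x. \<Sum>i=1..k. x i :: real) \<in> borel_measurable (PiM I (\<lambda>_. borel))"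
    using assms by (intro borel_measurable_partial_sum) auto
  show "Measurable.pred (PiM I (\<lambda>_. borel)) (\<lambda>x. \<bar>\<Sum>i=1..k. x i\<bar> < a)"
    by measurable
qed simp

lemma confined_restrict: "confined a n (\<lambda>i\<in>{1..n}. x i) \<longleftrightarrow> confined a n x"
proof -
  have "(\<Sum>i=1..k. (\<lambda>i\<in>{1..n}. x i) i) = (\<Sum>i=1..k. x i)" if "k \<in> {1..n}" for k
    using that by (intro sum.cong) auto
  then show ?thesis
    by (simp add: confined_def)
qed

lemma confined_Suc_update:
  "confined a (Suc n) (x(Suc n := y)) \<longleftrightarrow> confined a n x \<and> \<bar>(\<Sum>i=1..n. x i) + y\<bar> < a"
proof -
  have sums: "(\<Sum>i=1..k. (x(Suc n := y)) i) = (\<Sum>i=1..k. x i)" if "k \<le> n" for k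
    using that by (intro sum.cong) auto
  have "{1..Suc n} = insert (Suc n) {1..n}"
    by auto
  then show ?thesis
    using sums[of n] by (auto simp: confined_def sums)
qed

text \<open>Integrating out the last coordinate turns the weight at time \<open>n + 1\<close> into at least \<open>c\<close>
  times the weight at time \<open>n\<close>.\<close>

lemma nn_integral_confined_ge:
  fixes N :: "real measure" and g :: "real \<Rightarrow> real"
  assumes N: "prob_space N" "sets N = sets borel"
    and g [measurable]: "g \<in> borel_measurable borel"
    and g_support: "\<And>z. a \<le> \<bar>z\<bar> \<Longrightarrow> g z = 0"
    and step: "\<And>y. ennreal c * ennreal (g y) \<le> (\<integral>\<^sup>+t. ennreal (g (y + t)) \<partial>N)"
  shows "ennreal c ^ n * ennreal (g 0)
           \<le> (\<integral>\<^sup>+x. (if confined a n x then ennreal (g (\<Sum>i=1..n. x i)) else 0) \<partial>PiM {1..n} (\<lambda>_. N))"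
proof (induction n)
  case 0
  then show ?case
    by (simp add: PiM_empty confined_def)
next
  case (Suc n)
  interpret product_sigma_finite "\<lambda>_::nat. N"
    using N by (simp add: product_sigma_finite_def prob_space_imp_sigma_finite)
  have ins: "{1..Suc n} = insert (Suc n) {1..n}"
    by auto
  let ?w = "\<lambda>n x. if confined a n x then ennreal (g (\<Sum>i=1..n. x i)) else 0"
  have sets_Pi: "sets (PiM I (\<lambda>_. N)) = sets (PiM I (\<lambda>_. borel))" for I :: "nat set"
    using N by (intro sets_PiM_cong) auto
  have measurable_w: "?w m \<in> borel_measurable (PiM I (\<lambda>_. N))" if "{1..m} \<subseteq> I" for m I
  proof -
    note [measurable] = pred_confined[OF that] borel_measurable_partial_sum[OF that]
    show ?thesis
      unfolding measurable_cong_sets[OF sets_Pi refl] by measurable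
  qed
  have inner: "ennreal c * ?w n x \<le> (\<integral>\<^sup>+y. ?w (Suc n) (x(Suc n := y)) \<partial>N)" for x
  proof (cases "confined a n x")
    case True
    have "(\<integral>\<^sup>+y. ?w (Suc n) (x(Suc n := y)) \<partial>N) = (\<integral>\<^sup>+y. ennreal (g ((\<Sum>i=1..n. x i) + y)) \<partial>N)"
      using True g_support
      by (intro nn_integral_cong) (auto simp: confined_Suc_update not_less)
    then show ?thesis
      using True step by simp
  qed simp
  have "ennreal c ^ Suc n * ennreal (g 0) = ennreal c * (ennreal c ^ n * ennreal (g 0))"
    by (simp add: mult.assoc)
  also have "\<dots> \<le> ennreal c * (\<integral>\<^sup>+x. ?w n x \<partial>PiM {1..n} (\<lambda>_. N))"
    using Suc.IH by (intro mult_left_mono) auto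
  also have "\<dots> = (\<integral>\<^sup>+x. ennreal c * ?w n x \<partial>PiM {1..n} (\<lambda>_. N))"
    using measurable_w[of n "{1..n}"] by (simp add: nn_integral_cmult)
  also have "\<dots> \<le> (\<integral>\<^sup>+x. (\<integral>\<^sup>+y. ?w (Suc n) (x(Suc n := y)) \<partial>N) \<partial>PiM {1..n} (\<lambda>_. N))"
    using inner by (intro nn_integral_mono) auto
  also have "\<dots> = (\<integral>\<^sup>+x. ?w (Suc n) x \<partial>PiM (insert (Suc n) {1..n}) (\<lambda>_. N))"
    using measurable_w[OF equalityD1[OF ins]]
    by (intro product_nn_integral_insert[symmetric]) auto
  also have "PiM (insert (Suc n) {1..n}) (\<lambda>_. N) = PiM {1..Suc n} (\<lambda>_. N)"
    by (simp only: ins)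
  finally show ?case .
qed

lemma prob_confined_ge:
  fixes N :: "real measure" and g :: "real \<Rightarrow> real"
  assumes N: "prob_space N" "sets N = sets borel"
    and g: "g \<in> borel_measurable borel" "\<And>z. 0 \<le> g z" "\<And>z. g z \<le> 1"
    and g_support: "\<And>z. a \<le> \<bar>z\<bar> \<Longrightarrow> g z = 0"
    and c: "0 \<le> c"
    and step: "\<And>y. ennreal c * ennreal (g y) \<le> (\<integral>\<^sup>+t. ennreal (g (y + t)) \<partial>N)"
  shows "c ^ n * g 0 \<le> measure (PiM {1..n} (\<lambda>_. N)) {x \<in> space (PiM {1..n} (\<lambda>_. N)). confined a n x}"
proof -
  let ?P = "PiM {1..n} (\<lambda>_. N)"
  interpret P: prob_space ?P
    using N by (intro prob_space_PiM) auto
  have sets_P: "sets ?P = sets (PiM {1..n} (\<lambda>_. borel))"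
    using N by (intro sets_PiM_cong) auto
  have "Measurable.pred ?P (confined a n)"
    using pred_confined[of n "{1..n}" a, OF order_refl] unfolding pred_def measurable_cong_sets[OF sets_P refl] .
  then have A: "{x \<in> space ?P. confined a n x} \<in> sets ?P"
    by simp
  have "ennreal (c ^ n * g 0) = ennreal c ^ n * ennreal (g 0)"
    using c g by (simp add: ennreal_mult ennreal_power)
  also have "\<dots> \<le> (\<integral>\<^sup>+x. (if confined a n x then ennreal (g (\<Sum>i=1..n. x i)) else 0) \<partial>?P)"
    by (rule nn_integral_confined_ge[OF N g(1) g_support step])
  also have "\<dots> \<le> (\<integral>\<^sup>+x. indicator {x \<in> space ?P. confined a n x} x \<partial>?P)"
    using g by (intro nn_integral_mono) (auto simp: indicator_def)
  also have "\<dots> = emeasure ?P {x \<in> space ?P. confined a n x}"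
    using A by simp
  also have "\<dots> = ennreal (measure ?P {x \<in> space ?P. confined a n x})"
    by (rule P.emeasure_eq_measure)
  finally show ?thesis
    by simp
qed

lemma (in prob_space) prob_indep_vars_eq_PiM:
  fixes X :: "'i \<Rightarrow> _ \<Rightarrow> real" and N :: "real measure"
  assumes indep: "indep_vars (\<lambda>_. borel) X I"
    and distr: "\<And>i. i \<in> I \<Longrightarrow> distr M borel (X i) = N"
    and P: "Measurable.pred (PiM I (\<lambda>_. borel)) P"
  shows "prob {\<omega> \<in> space M. P (\<lambda>i\<in>I. X i \<omega>)} = measure (PiM I (\<lambda>_. N)) {x \<in> space (PiM I (\<lambda>_. N)). P x}"
proof (cases "I = {}")
  case True
  then have "(\<lambda>i\<in>I. X i \<omega>) = (\<lambda>_. undefined)" for \<omega>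
    by auto
  with True show ?thesis
    by (cases "P (\<lambda>_. undefined)") (simp_all add: PiM_empty prob_space Collect_conv_if)
next
  case False
  let ?B = "PiM I (\<lambda>_. borel :: real measure)"
  let ?Y = "\<lambda>\<omega>. \<lambda>i\<in>I. X i \<omega>"
  have rv: "random_variable borel (X i)" if "i \<in> I" for i
    using indep that by (simp add: indep_vars_def)
  then have Y: "?Y \<in> measurable M ?B"
    by (intro measurable_restrict) auto
  have "distr M ?B ?Y = PiM I (\<lambda>i. distr M borel (X i))"
    using indep_vars_iff_distr_eq_PiM'[where M'="\<lambda>_. borel" and X=X and I=I] False rv indep by simp
  also have "\<dots> = PiM I (\<lambda>_. N)"
    using distr by (intro PiM_cong) auto
  finally have distr_Y: "distr M ?B ?Y = PiM I (\<lambda>_. N)" .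
  have A: "{x \<in> space ?B. P x} \<in> sets ?B"
    using P by simp
  have "prob {\<omega> \<in> space M. P (?Y \<omega>)} = prob (?Y -` {x \<in> space ?B. P x} \<inter> space M)"
    using measurable_space[OF Y] by (intro arg_cong[where f=prob]) blast
  also have "\<dots> = measure (distr M ?B ?Y) {x \<in> space ?B. P x}"
    by (rule measure_distr[OF Y A, symmetric])
  also have "space ?B = space (PiM I (\<lambda>_. N))"
    by (metis distr_Y space_distr)
  also note distr_Y
  finally show ?thesis .
qed

lemma std_normal_walk_confined_ge:
  fixes l :: real
  assumes "0 < l"
  shows "4 powr (- real n / l)
           \<le> measure (PiM {1..n} (\<lambda>_. std_normal_distribution))
                {x \<in> space (PiM {1..n} (\<lambda>_. std_normal_distribution)). confined (4 * sqrt l) n x}"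
proof -
  have a: "0 < 4 * sqrt l"
    using assms by simp
  then have "4 powr (- real n / l) = (4 powr (- 1 / l)) ^ n * cos_bump (4 * sqrt l) 0"
    by (simp add: cos_bump_zero powr_power)
  also have "\<dots> \<le> measure (PiM {1..n} (\<lambda>_. std_normal_distribution))
                {x \<in> space (PiM {1..n} (\<lambda>_. std_normal_distribution)). confined (4 * sqrt l) n x}"
    using a nn_integral_cos_bump_shift_ge[OF assms]
    by (intro prob_confined_ge)
      (auto simp: prob_space_normal_density cos_bump_nonneg cos_bump_le_one cos_bump_outside)
  finally show ?thesis .
qed

theorem lemma4p5:
  fixes M :: "'a measure" and X :: "nat \<Rightarrow> 'a \<Rightarrow> real" and n :: nat and l :: real
  assumes "prob_space M"
    and "prob_space.indep_vars M (\<lambda>_. borel) X {1..n}"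
    and "\<And>i. i \<in> {1..n} \<Longrightarrow> distributed M lborel (X i) std_normal_density"
    and "l > 0"
  shows "measure M {\<omega> \<in> space M. (\<forall>k\<in>{1..n}. \<bar>\<Sum>i=1..k. X i \<omega>\<bar> < 4 * sqrt l)}
           \<ge> 4 powr (- real n / l)"
proof -
  interpret prob_space M
    using assms(1) .
  have distr: "distr M borel (X i) = std_normal_distribution" if "i \<in> {1..n}" for i
    using assms(3)[OF that] distr_cong[of M M borel lborel "X i" "X i"]
    by (simp add: distributed_def)
  have "4 powr (- real n / l)
      \<le> measure (PiM {1..n} (\<lambda>_. std_normal_distribution))
           {x \<in> space (PiM {1..n} (\<lambda>_. std_normal_distribution)). confined (4 * sqrt l) n x}"
    by (rule std_normal_walk_confined_ge[OF assms(4)])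
  also have "\<dots> = prob {\<omega> \<in> space M. confined (4 * sqrt l) n (\<lambda>i\<in>{1..n}. X i \<omega>)}"
    by (rule prob_indep_vars_eq_PiM[OF assms(2) distr pred_confined[OF order_refl], symmetric])
  also have "\<dots> = prob {\<omega> \<in> space M. \<forall>k\<in>{1..n}. \<bar>\<Sum>i=1..k. X i \<omega>\<bar> < 4 * sqrt l}"
    by (simp add: confined_restrict confined_def)
  finally show ?thesis .
qed

end
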